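(* Let $\|\cdot\|$ be a norm on $\mathbb{R}^d$ and $T:\mathbb{R}^d\to\mathbb{R}^d$ nonexpansive with $\operatorname{Fix}T\neq\emptyset$. Let $(\beta_n)_{n\ge1}\subseteq(0,1)$ be nondecreasing with $\lim_n\beta_n=1$ (and $\beta_0=0$), such that $\sum_{j=1}^\infty(1-\beta_j)=+\infty$ and $\sum_{j=1}^n(\beta_j-\beta_{j-1})<+\infty$. Let $x^0\in\mathbb{R}^d$ and $(x^n)$ be generated by $x^n=(1-\beta_n)x^0+\beta_n(Tx^{n-1}+U_n)$, where $(U_n)$ are random vectors with $\mathbb{E}(U_n)=0$ and $\sigma_n:=\mathbb{E}(\|U_n\|)$ satisfying $\sum_{n=1}^\infty\sigma_n<+\infty$. Then: (a) $\|x^n-Tx^n\|\to0$ almost surely, and (almost surely) every accumulation point of $(x^n)$ is a fixed point of $T$. (b) If $(\mathbb{R}^d,\|\cdot\|)$ is smooth, in the sense that $\lim_{\lambda\to0}\frac{\|x+\lambda y\|-\|x\|}{\lambda}$ exists for all $x,y$ in the unit sphere, then $(x^n)$ converges almost surely to some $x^*\in\operatorname{Fix}T$. *)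

theory Defs
  imports "HOL-Probability.Probability"
begin

definition is_norm :: "('v::real_vector \<Rightarrow> real) \<Rightarrow> bool" where
  "is_norm N \<longleftrightarrow>
     (\<forall>x. 0 \<le> N x) \<and> (\<forall>x. N x = 0 \<longleftrightarrow> x = 0) \<and>
     (\<forall>a x. N (a *\<^sub>R x) = \<bar>a\<bar> * N x) \<and>
     (\<forall>x y. N (x + y) \<le> N x + N y)"

definition nonexpansive_wrt :: "('v::real_vector \<Rightarrow> real) \<Rightarrow> ('v \<Rightarrow> 'v) \<Rightarrow> bool" where
  "nonexpansive_wrt N T \<longleftrightarrow> (\<forall>x y. N (T x - T y) \<le> N (x - y))"

definition smooth_norm :: "('v::real_vector \<Rightarrow> real) \<Rightarrow> bool" where
  "smooth_norm N \<longleftrightarrow>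
     (\<forall>x y. N x = 1 \<longrightarrow> N y = 1 \<longrightarrow>
        (\<exists>L. ((\<lambda>t. (N (x + t *\<^sub>R y) - N x) / t) \<longlongrightarrow> L) (at 0)))"

end

theory Submission
  imports Defs
begin

(* Since the expected error norms are summable, almost every sample path has summable errors
   N(U_n), and along such a path Xu's recursion lemma shows that the perturbed iterates stay
   asymptotically close to the exact Halpern iterates y_n started from the same anchor x0, so
   everything reduces to the deterministic Halpern iteration.  There Xu's lemma, fed with
   sum |beta_(n+1) - beta_n| < oo, gives N(y_(n+1) - y_n) -> 0 and hence N(y_n - T y_n) -> 0;
   limit points are fixed because T is nonexpansive.
   For a smooth norm, N^2 has a directional derivative D(v; w) that is linear in w.  A limit q
   of the path z_t = (1 - t) x0 + t T z_t as t -> 1 is a fixed point with D(p - q; x0 - q) <= 0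
   for every fixed point p.  The tangent inequality
     N(y_(n+1) - q)^2 <= beta_(n+1) N(y_n - q)^2 + (1 - beta_(n+1)) D(y_(n+1) - q; x0 - q),
   whose last factor has limsup <= 0, then gives y_n -> q by Xu's lemma once more. *)

section \<open>Norms given as functions\<close>

locale norm_function =
  fixes N :: "'v::real_vector \<Rightarrow> real"
  assumes is_norm: "is_norm N"
begin

lemma nonneg: "0 \<le> N x"
  using is_norm unfolding is_norm_def by auto

lemma eq_0_iff: "N x = 0 \<longleftrightarrow> x = 0"
  using is_norm unfolding is_norm_def by auto

lemma scaleR: "N (a *\<^sub>R x) = \<bar>a\<bar> * N x"
  using is_norm unfolding is_norm_def by auto

lemma triangle: "N (x + y) \<le> N x + N y"
  using is_norm unfolding is_norm_def by auto

lemma zero [simp]: "N 0 = 0"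
  using eq_0_iff by auto

lemma minus: "N (- x) = N x"
  using scaleR[of "-1" x] by simp

lemma minus_commute: "N (x - y) = N (y - x)"
  using minus[of "x - y"] by simp

lemma triangle_diff: "N (x - z) \<le> N (x - y) + N (y - z)"
  using triangle[of "x - y" "y - z"] by simp

lemma reverse_triangle: "\<bar>N x - N y\<bar> \<le> N (x - y)"
  using triangle[of "x - y" y] triangle[of "y - x" x] minus_commute[of x y] by simp

lemma sum_le: "N (sum f A) \<le> (\<Sum>i\<in>A. N (f i))"
proof (induction A rule: infinite_finite_induct)
  case (insert a A)
  then show ?case using triangle[of "f a" "sum f A"] by simp
qed auto

lemma convex_combination_le:
  assumes "0 \<le> t" "t \<le> 1"
  shows "N ((1 - t) *\<^sub>R a + t *\<^sub>R b) \<le> (1 - t) * N a + t * N b"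
  using triangle[of "(1 - t) *\<^sub>R a" "t *\<^sub>R b"] assms by (simp add: scaleR)

lemma convex_combination_sq_le:
  assumes "0 \<le> t" "t \<le> 1"
  shows "(N ((1 - t) *\<^sub>R a + t *\<^sub>R b))\<^sup>2 \<le> (1 - t) * (N a)\<^sup>2 + t * (N b)\<^sup>2"
proof -
  have "(N ((1 - t) *\<^sub>R a + t *\<^sub>R b))\<^sup>2 \<le> ((1 - t) * N a + t * N b)\<^sup>2"
    using convex_combination_le[OF assms] nonneg by (simp add: power_mono)
  also have "\<dots> = (1 - t) * (N a)\<^sup>2 + t * (N b)\<^sup>2 - (1 - t) * t * (N a - N b)\<^sup>2"
    by (simp add: power2_eq_square algebra_simps)
  also have "\<dots> \<le> (1 - t) * (N a)\<^sup>2 + t * (N b)\<^sup>2"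
    using assms by simp
  finally show ?thesis .
qed

lemma convex_ball: "convex {z. N (z - p) \<le> r}"
proof (rule convexI)
  fix a b :: 'v and u v :: real
  assume ab: "a \<in> {z. N (z - p) \<le> r}" "b \<in> {z. N (z - p) \<le> r}"
    and uv: "0 \<le> u" "0 \<le> v" "u + v = 1"
  have "u *\<^sub>R a + v *\<^sub>R b - p = (1 - v) *\<^sub>R (a - p) + v *\<^sub>R (b - p)"
    using uv(3) by (simp add: algebra_simps flip: scaleR_add_left)
  then have "N (u *\<^sub>R a + v *\<^sub>R b - p) \<le> (1 - v) * N (a - p) + v * N (b - p)"
    using convex_combination_le[of v] uv by simp
  also have "\<dots> \<le> (1 - v) * r + v * r"
    using ab uv by (intro add_mono mult_left_mono) auto
  finally show "u *\<^sub>R a + v *\<^sub>R b \<in> {z. N (z - p) \<le> r}"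
    by (simp add: algebra_simps)
qed

lemma tendsto_add_const:
  assumes "(\<lambda>k. N (f k - l)) \<longlonglongrightarrow> 0"
  shows "(\<lambda>k. N (f k + d)) \<longlonglongrightarrow> N (l + d)"
proof -
  have "(\<lambda>k. N (f k + d) - N (l + d)) \<longlonglongrightarrow> 0"
    by (rule Lim_null_comparison[OF _ assms])
      (use reverse_triangle[of "f k + d" "l + d" for k] in simp)
  then show ?thesis by (rule LIM_zero_cancel)
qed

lemma tendsto_along_line: "((\<lambda>t. N (v + t *\<^sub>R w)) \<longlongrightarrow> N v) (at 0)"
proof -
  have "((\<lambda>t. \<bar>t\<bar> * N w) \<longlongrightarrow> \<bar>0\<bar> * N w) (at 0)"
    by (intro tendsto_mult tendsto_rabs tendsto_ident_at tendsto_const)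
  then have "((\<lambda>t. \<bar>t\<bar> * N w) \<longlongrightarrow> 0) (at 0)"
    by simp
  then have "((\<lambda>t. N (v + t *\<^sub>R w) - N v) \<longlongrightarrow> 0) (at 0)"
    by (rule Lim_null_comparison[OF always_eventually, rotated])
      (use reverse_triangle[of "v + t *\<^sub>R w" v for t] in \<open>simp_all add: scaleR\<close>)
  then show ?thesis
    by (rule LIM_zero_cancel)
qed

lemma sq_quotient_mono:
  assumes "0 < u" "u \<le> s"
  shows "((N (v + u *\<^sub>R w))\<^sup>2 - (N v)\<^sup>2) / u \<le> ((N (v + s *\<^sub>R w))\<^sup>2 - (N v)\<^sup>2) / s"
proof -
  define t where "t = u / s"
  have t: "0 < t" "t \<le> 1" "u = t * s"
    using assms by (auto simp: t_def)
  have "v + u *\<^sub>R w = (1 - t) *\<^sub>R v + t *\<^sub>R (v + s *\<^sub>R w)"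
    using t(3) by (simp add: algebra_simps)
  then have "(N (v + u *\<^sub>R w))\<^sup>2 - (N v)\<^sup>2 \<le> t * ((N (v + s *\<^sub>R w))\<^sup>2 - (N v)\<^sup>2)"
    using convex_combination_sq_le[of t v "v + s *\<^sub>R w"] t by (simp add: algebra_simps)
  then have "((N (v + u *\<^sub>R w))\<^sup>2 - (N v)\<^sup>2) / u \<le> t * ((N (v + s *\<^sub>R w))\<^sup>2 - (N v)\<^sup>2) / u"
    using assms(1) by (rule divide_right_mono[OF _ less_imp_le])
  also have "\<dots> = ((N (v + s *\<^sub>R w))\<^sup>2 - (N v)\<^sup>2) / s"
    using t by simp
  finally show ?thesis .
qed

lemma fixed_point_if_asymptotically_fixed:
  assumes T: "nonexpansive_wrt N T"
    and fixed: "(\<lambda>k. N (z k - T (z k))) \<longlonglongrightarrow> 0" and conv: "(\<lambda>k. N (z k - p)) \<longlonglongrightarrow> 0"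
  shows "T p = p"
proof -
  have bound: "N (p - T p) \<le> 2 * N (z k - p) + N (z k - T (z k))" for k
    using triangle_diff[of p "T p" "z k"] triangle_diff[of "z k" "T p" "T (z k)"]
      T[unfolded nonexpansive_wrt_def, rule_format, of "z k" p] minus_commute[of p "z k"]
    by linarith
  have "(\<lambda>k. 2 * N (z k - p) + N (z k - T (z k))) \<longlonglongrightarrow> 2 * 0 + 0"
    by (intro tendsto_intros conv fixed)
  then have "N (p - T p) \<le> 0"
    by (intro tendsto_lowerbound[of _ _ sequentially]) (use bound in auto)
  then show ?thesis
    using nonneg[of "p - T p"] eq_0_iff[of "p - T p"] by simp
qed

lemma anchored_fixed_point_bound:
  assumes T: "nonexpansive_wrt N T" and p: "T p = p"
    and z: "z = (1 - t) *\<^sub>R x + t *\<^sub>R T z" and t: "0 \<le> t" "t < 1"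
  shows "N (z - p) \<le> N (x - p)"
proof -
  have "z - p = (1 - t) *\<^sub>R (x - p) + t *\<^sub>R (T z - T p)"
    using p by (subst z) (simp add: algebra_simps)
  then have "N (z - p) \<le> (1 - t) * N (x - p) + t * N (T z - T p)"
    using convex_combination_le[of t "x - p" "T z - T p"] t by simp
  also have "\<dots> \<le> (1 - t) * N (x - p) + t * N (z - p)"
    using T t unfolding nonexpansive_wrt_def by (intro add_left_mono mult_left_mono) auto
  finally have "(1 - t) * N (z - p) \<le> (1 - t) * N (x - p)"
    by (simp add: algebra_simps)
  then show ?thesis
    using t by simp
qed

lemma fixed_point_of_anchored_limit:
  assumes T: "nonexpansive_wrt N T" and "T p = p"
    and z: "\<And>k. z k = (1 - t k) *\<^sub>R x + t k *\<^sub>R T (z k)" and t: "\<And>k. 0 \<le> t k" "\<And>k. t k < 1"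
    and t_lim: "t \<longlonglongrightarrow> 1" and z_lim: "(\<lambda>k. N (z k - q)) \<longlonglongrightarrow> 0"
  shows "T q = q"
proof (rule fixed_point_if_asymptotically_fixed[OF T _ z_lim])
  have "z k - T (z k) = (1 - t k) *\<^sub>R (x - T (z k))" for k
    by (subst (1) z) (simp add: algebra_simps)
  moreover have "N (x - T (z k)) \<le> 2 * N (x - p)" for k
  proof -
    have "N (T (z k) - T p) \<le> N (x - p)"
      using T[unfolded nonexpansive_wrt_def, rule_format, of "z k" p]
        anchored_fixed_point_bound[OF T \<open>T p = p\<close> z[of k] t(1)[of k] t(2)[of k]] by linarith
    then show ?thesis
      using triangle_diff[of x "T (z k)" p] minus_commute[of p "T (z k)"] \<open>T p = p\<close> by simp
  qed
  moreover have "0 \<le> 1 - t k" for k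
    using t(2)[of k] by simp
  ultimately have bound: "N (z k - T (z k)) \<le> (1 - t k) * (2 * N (x - p))" for k
    by (simp add: scaleR mult_left_mono)
  have "(\<lambda>k. (1 - t k) * (2 * N (x - p))) \<longlonglongrightarrow> (1 - 1) * (2 * N (x - p))"
    by (intro tendsto_intros t_lim)
  then have lim: "(\<lambda>k. (1 - t k) * (2 * N (x - p))) \<longlonglongrightarrow> 0"
    by simp
  show "(\<lambda>k. N (z k - T (z k))) \<longlonglongrightarrow> 0"
    by (rule Lim_null_comparison[OF always_eventually lim]) (simp add: nonneg bound)
qed

end

locale fin_dim_norm = norm_function N for N :: "'v::euclidean_space \<Rightarrow> real"
begin

lemma le_mult_norm: obtains C where "C > 0" "\<And>x. N x \<le> C * norm x"
proof
  define C where "C = (\<Sum>b\<in>Basis. N b) + 1"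
  show "C > 0"
    unfolding C_def using nonneg by (simp add: add_nonneg_pos sum_nonneg)
  show "N x \<le> C * norm x" for x
  proof -
    have "N x = N (\<Sum>b\<in>Basis. (x \<bullet> b) *\<^sub>R b)"
      by (simp add: euclidean_representation)
    also have "\<dots> \<le> (\<Sum>b\<in>Basis. \<bar>x \<bullet> b\<bar> * N b)"
      using sum_le[of "\<lambda>b. (x \<bullet> b) *\<^sub>R b" Basis] by (simp add: scaleR)
    also have "\<dots> \<le> (\<Sum>b\<in>Basis. norm x * N b)"
      by (intro sum_mono mult_right_mono Basis_le_norm nonneg)
    also have "\<dots> \<le> C * norm x"
      unfolding C_def by (simp add: sum_distrib_right[symmetric] algebra_simps)
    finally show ?thesis .
  qed
qed

lemma continuous: "continuous_on S N"
proof -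
  obtain C where C: "C > 0" "\<And>x. N x \<le> C * norm x"
    using le_mult_norm by blast
  have "C-lipschitz_on S N"
    by (rule lipschitz_onI)
      (use C in \<open>auto simp: dist_norm dist_real_def intro: order_trans[OF reverse_triangle]\<close>)
  then show ?thesis
    by (rule lipschitz_on_continuous_on)
qed

text \<open>Minimise \<open>N\<close> over the compact Euclidean unit sphere.\<close>

lemma mult_norm_le: obtains c where "c > 0" "\<And>x. c * norm x \<le> N x"
proof -
  obtain b :: 'v where "b \<in> Basis"
    using nonempty_Basis by blast
  then have "sphere (0::'v) 1 \<noteq> {}"
    by (auto simp: norm_Basis)
  then obtain m where m: "m \<in> sphere 0 1" "\<And>y. y \<in> sphere 0 1 \<Longrightarrow> N m \<le> N y"
    using continuous_attains_inf[OF compact_sphere _ continuous] by blast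
  have "N m * norm x \<le> N x" for x
  proof (cases "x = 0")
    case False
    then have "N m \<le> N ((1 / norm x) *\<^sub>R x)"
      by (intro m(2)) simp
    then show ?thesis
      using False by (simp add: scaleR field_simps)
  qed simp
  moreover have "N m > 0"
    using m(1) nonneg[of m] eq_0_iff[of m] by auto
  ultimately show ?thesis
    using that by blast
qed

lemma bounded_seq_has_convergent_subseq:
  fixes f :: "nat \<Rightarrow> 'v"
  assumes "\<And>n. N (f n - a) \<le> B"
  obtains r l where "strict_mono r" "(\<lambda>n. N (f (r n) - l)) \<longlonglongrightarrow> 0"
proof -
  obtain c where c: "c > 0" "\<And>x. c * norm x \<le> N x"
    using mult_norm_le by blast
  obtain C where C: "C > 0" "\<And>x. N x \<le> C * norm x"
    using le_mult_norm by blast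
  have "norm (f n) \<le> norm a + B / c" for n
  proof -
    have "norm (f n - a) \<le> B / c"
      using c(2)[of "f n - a"] assms[of n] c(1) by (simp add: field_simps)
    then show ?thesis
      using norm_triangle_sub[of "f n" a] by linarith
  qed
  then have "bounded (range f)"
    unfolding bounded_iff by blast
  from bounded_imp_convergent_subsequence[OF this]
  obtain l r where lr: "strict_mono r" "(f \<circ> r) \<longlonglongrightarrow> l"
    by blast
  have "(\<lambda>n. C * norm (f (r n) - l)) \<longlonglongrightarrow> 0"
    using tendsto_mult_right_zero[OF tendsto_norm_zero[OF LIM_zero[OF lr(2)]]]
    by (simp add: o_def)
  then have "(\<lambda>n. N (f (r n) - l)) \<longlonglongrightarrow> 0"
    by (rule Lim_null_comparison[rotated]) (use C(2) nonneg in simp)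
  with lr(1) show ?thesis
    using that by blast
qed

lemma compact_ball: "compact {z. N (z - p) \<le> r}"
proof -
  obtain c where c: "c > 0" "\<And>x. c * norm x \<le> N x"
    using mult_norm_le by blast
  have "closed {z. N (z - p) \<le> r}"
    by (intro closed_Collect_le continuous_on_compose2[OF continuous] continuous_intros) auto
  moreover have "norm z \<le> norm p + r / c" if "N (z - p) \<le> r" for z
  proof -
    have "norm (z - p) \<le> r / c"
      using c(2)[of "z - p"] c(1) that by (simp add: field_simps)
    then show ?thesis
      using norm_triangle_sub[of z p] by linarith
  qed
  then have "bounded {z. N (z - p) \<le> r}"
    unfolding bounded_iff by blast
  ultimately show ?thesis
    by (simp add: compact_eq_bounded_closed)
qed

lemma nonexpansive_continuous:
  assumes "nonexpansive_wrt N T"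
  shows "continuous_on S T"
proof -
  obtain c where c: "c > 0" "\<And>x. c * norm x \<le> N x"
    using mult_norm_le by blast
  obtain C where C: "C > 0" "\<And>x. N x \<le> C * norm x"
    using le_mult_norm by blast
  have "(C / c)-lipschitz_on S T"
  proof (rule lipschitz_onI)
    fix a b
    have "c * norm (T a - T b) \<le> C * norm (a - b)"
      using c(2)[of "T a - T b"] assms C(2)[of "a - b"]
      unfolding nonexpansive_wrt_def by (meson order_trans)
    then show "dist (T a) (T b) \<le> C / c * dist a b"
      using c(1) by (simp add: dist_norm field_simps mult.commute)
  qed (use c C in auto)
  then show ?thesis
    by (rule lipschitz_on_continuous_on)
qed

text \<open>The map \<open>z \<mapsto> (1 - t) x + t T z\<close> leaves the \<open>N\<close>-ball of radius \<open>N (x - p)\<close> around a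
  fixed point \<open>p\<close> invariant, so Brouwer's theorem applies.\<close>

lemma anchored_fixed_point_exists:
  assumes T: "nonexpansive_wrt N T" and p: "T p = p" and t: "0 \<le> t" "t \<le> 1"
  obtains z where "z = (1 - t) *\<^sub>R x + t *\<^sub>R T z"
proof -
  define K where "K = {z. N (z - p) \<le> N (x - p)}"
  have "(1 - t) *\<^sub>R x + t *\<^sub>R T z \<in> K" if "z \<in> K" for z
  proof -
    have "(1 - t) *\<^sub>R x + t *\<^sub>R T z - p = (1 - t) *\<^sub>R (x - p) + t *\<^sub>R (T z - T p)"
      using p by (simp add: algebra_simps)
    then have "N ((1 - t) *\<^sub>R x + t *\<^sub>R T z - p) \<le> (1 - t) * N (x - p) + t * N (T z - T p)"
      using convex_combination_le[OF t] by simp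
    also have "\<dots> \<le> (1 - t) * N (x - p) + t * N (x - p)"
      using that T t unfolding K_def nonexpansive_wrt_def
      by (intro add_mono mult_left_mono) (auto intro: order_trans)
    finally show ?thesis
      by (simp add: K_def algebra_simps)
  qed
  moreover have "K \<noteq> {}"
    using nonneg by (auto simp: K_def intro!: exI[of _ p])
  moreover have "continuous_on K (\<lambda>z. (1 - t) *\<^sub>R x + t *\<^sub>R T z)"
    by (intro continuous_intros nonexpansive_continuous[OF T])
  ultimately obtain z where "(1 - t) *\<^sub>R x + t *\<^sub>R T z = z"
    using brouwer[OF compact_ball convex_ball, of p "N (x - p)"] unfolding K_def by blast
  then show ?thesis
    using that by metis
qed

end

section \<open>Xu's lemma\<close>

lemma prod_one_minus_tendsto_0:
  fixes g :: "nat \<Rightarrow> real"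
  assumes g: "\<And>n. 0 \<le> g n" "\<And>n. g n \<le> 1" and diverges: "\<not> summable g"
  shows "(\<lambda>n. \<Prod>k\<in>{m..<n}. 1 - g k) \<longlonglongrightarrow> 0"
proof -
  have unbounded: "\<exists>n. K \<le> sum g {m..<n}" for K
  proof (rule ccontr)
    assume small: "\<nexists>n. K \<le> sum g {m..<n}"
    have "sum g {..<n} \<le> sum g {..<m} + K" for n
    proof (cases "m \<le> n")
      case True
      then have "sum g {..<n} = sum g {..<m} + sum g {m..<n}"
        using sum.atLeastLessThan_concat[of 0 m n g] by (simp add: atLeast0LessThan)
      moreover have "sum g {m..<n} < K"
        using small by (simp add: not_le)
      ultimately show ?thesis
        by linarith
    next
      case False
      then have "sum g {..<n} \<le> sum g {..<m}"
        using g by (intro sum_mono2) auto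
      moreover have "\<not> K \<le> sum g {m..<m}"
        using small by blast
      ultimately show ?thesis
        by simp
    qed
    then have "summable g"
      by (rule summableI_nonneg_bounded[OF g(1)])
    with diverges show False ..
  qed
  have "filterlim (\<lambda>n. sum g {m..<n}) at_top sequentially"
    unfolding filterlim_at_top eventually_sequentially
  proof
    fix K
    obtain n0 where "K \<le> sum g {m..<n0}"
      using unbounded by blast
    moreover have "sum g {m..<n0} \<le> sum g {m..<n}" if "n0 \<le> n" for n
      using that g by (intro sum_mono2) auto
    ultimately show "\<exists>n0. \<forall>n\<ge>n0. K \<le> sum g {m..<n}"
      by (blast intro: order_trans)
  qed
  then have exp_lim: "(\<lambda>n. exp (- sum g {m..<n})) \<longlonglongrightarrow> 0"
    by (intro filterlim_compose[OF exp_at_bot] filterlim_uminus_at_top[THEN iffD1])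
  have "(\<Prod>k\<in>{m..<n}. 1 - g k) \<le> (\<Prod>k\<in>{m..<n}. exp (- g k))" for n
    using g exp_ge_add_one_self[of "- g k" for k] by (intro prod_mono) auto
  then have le_exp: "(\<Prod>k\<in>{m..<n}. 1 - g k) \<le> exp (- sum g {m..<n})" for n
    by (simp add: exp_sum sum_negf[symmetric])
  have nonneg: "0 \<le> (\<Prod>k\<in>{m..<n}. 1 - g k)" for n
    using g(2) by (simp add: prod_nonneg)
  show ?thesis
    by (rule tendsto_sandwich[OF _ _ tendsto_const exp_lim]) (simp_all add: nonneg le_exp)
qed

lemma recursive_inequality_unrolled:
  fixes a g c :: "nat \<Rightarrow> real"
  assumes g: "\<And>n. 0 \<le> g n" "\<And>n. g n \<le> 1" and c: "\<And>n. 0 \<le> c n" and "0 \<le> e"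
    and rec: "\<And>n. m \<le> n \<Longrightarrow> a (Suc n) \<le> (1 - g n) * a n + g n * e + c n"
    and "m \<le> n"
  shows "a n \<le> e + (\<Prod>k\<in>{m..<n}. 1 - g k) * a m + (\<Sum>k\<in>{m..<n}. c k)"
  using \<open>m \<le> n\<close>
proof (induction n rule: dec_induct)
  case base
  then show ?case
    using \<open>0 \<le> e\<close> by simp
next
  case (step n)
  let ?P = "\<Prod>k\<in>{m..<n}. 1 - g k" and ?S = "\<Sum>k\<in>{m..<n}. c k"
  have "a (Suc n) \<le> (1 - g n) * (e + ?P * a m + ?S) + g n * e + c n"
    using rec[OF step(1)] mult_left_mono[OF step(3), of "1 - g n"] g(2)[of n] by linarith
  also have "\<dots> \<le> e + ((1 - g n) * ?P) * a m + (?S + c n)"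
    using g[of n] sum_nonneg[of "{m..<n}" c] c by (simp add: algebra_simps mult_left_le_one_le)
  finally show ?case
    using step(1) by (simp add: prod.atLeastLessThan_Suc sum.atLeastLessThan_Suc mult.commute)
qed

text \<open>Xu's lemma (H.-K. Xu, J. London Math. Soc. 2002, Lemma 2.5).\<close>

lemma xu_tendsto_0:
  fixes a g b c :: "nat \<Rightarrow> real"
  assumes a: "\<And>n. 0 \<le> a n" and g: "\<And>n. 0 \<le> g n" "\<And>n. g n \<le> 1" "\<not> summable g"
    and c: "\<And>n. 0 \<le> c n" "summable c"
    and b: "\<And>e. e > 0 \<Longrightarrow> eventually (\<lambda>n. b n \<le> e) sequentially"
    and rec: "eventually (\<lambda>n. a (Suc n) \<le> (1 - g n) * a n + g n * b n + c n) sequentially"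
  shows "a \<longlonglongrightarrow> 0"
proof (rule order_tendstoI)
  show "eventually (\<lambda>n. y < a n) sequentially" if "y < 0" for y
  proof (rule always_eventually, rule allI)
    show "y < a n" for n
      using a[of n] that by linarith
  qed
  show "eventually (\<lambda>n. a n < r) sequentially" if "0 < r" for r
  proof -
    define e where "e = r / 3"
    have e: "e > 0"
      using that by (simp add: e_def)
    obtain m1 where m1: "\<And>n. m1 \<le> n \<Longrightarrow> b n \<le> e \<and> a (Suc n) \<le> (1 - g n) * a n + g n * b n + c n"
      using eventually_conj[OF b[OF e] rec] unfolding eventually_sequentially by blast
    obtain m2 where m2: "\<And>m n. m2 \<le> m \<Longrightarrow> norm (\<Sum>k\<in>{m..<n}. c k) < e"
      using c(2) e unfolding summable_Cauchy by blast
    define m where "m = max m1 m2"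
    have unrolled: "a n \<le> e + (\<Prod>k\<in>{m..<n}. 1 - g k) * a m + (\<Sum>k\<in>{m..<n}. c k)" if "m \<le> n" for n
    proof (rule recursive_inequality_unrolled[OF g(1,2) c(1) less_imp_le[OF e] _ that])
      fix k assume "m \<le> k"
      then have "b k \<le> e" "a (Suc k) \<le> (1 - g k) * a k + g k * b k + c k"
        using m1[of k] by (auto simp: m_def)
      then show "a (Suc k) \<le> (1 - g k) * a k + g k * e + c k"
        using mult_left_mono[OF \<open>b k \<le> e\<close> g(1)[of k]] by linarith
    qed
    have "(\<lambda>n. (\<Prod>k\<in>{m..<n}. 1 - g k) * a m) \<longlonglongrightarrow> 0"
      by (rule tendsto_mult_left_zero[OF prod_one_minus_tendsto_0[OF g]])
    then have "eventually (\<lambda>n. (\<Prod>k\<in>{m..<n}. 1 - g k) * a m < e) sequentially"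
      using e by (rule order_tendstoD)
    then show ?thesis
      using eventually_ge_at_top[of m]
    proof eventually_elim
      case (elim n)
      then show ?case
        using unrolled[of n] m2[of m n] by (simp add: m_def e_def)
    qed
  qed
qed

section \<open>The Halpern iteration\<close>

primrec halpern :: "('v::real_vector \<Rightarrow> 'v) \<Rightarrow> (nat \<Rightarrow> real) \<Rightarrow> 'v \<Rightarrow> nat \<Rightarrow> 'v" where
  "halpern T \<beta> x0 0 = x0"
| "halpern T \<beta> x0 (Suc n) = (1 - \<beta> (Suc n)) *\<^sub>R x0 + \<beta> (Suc n) *\<^sub>R T (halpern T \<beta> x0 n)"

locale halpern_iteration = norm_function N for N :: "'v::real_vector \<Rightarrow> real" +
  fixes T :: "'v \<Rightarrow> 'v" and \<beta> :: "nat \<Rightarrow> real" and x0 :: 'v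
  assumes nonexpansive: "nonexpansive_wrt N T"
    and has_fixed_point: "\<exists>p. T p = p"
    and beta_nonneg: "0 \<le> \<beta> (Suc n)"
    and beta_le_1: "\<beta> (Suc n) \<le> 1"
    and beta_tendsto_1: "(\<lambda>n. \<beta> (Suc n)) \<longlonglongrightarrow> 1"
    and beta_not_summable: "\<not> summable (\<lambda>n. 1 - \<beta> (Suc n))"
    and beta_summable_diff: "summable (\<lambda>n. \<bar>\<beta> (Suc (Suc n)) - \<beta> (Suc n)\<bar>)"
begin

abbreviation y :: "nat \<Rightarrow> 'v" where
  "y \<equiv> halpern T \<beta> x0"

lemma T_nonexpansive: "N (T a - T b) \<le> N (a - b)"
  using nonexpansive unfolding nonexpansive_wrt_def by blast

lemma halpern_recursion_tendsto_0:
  assumes "\<And>n. 0 \<le> a n" "\<And>n. 0 \<le> c n" "summable c"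
    and "\<And>n. a (Suc n) \<le> \<beta> (Suc n) * a n + c n"
  shows "a \<longlonglongrightarrow> 0"
  using assms beta_nonneg beta_le_1 beta_not_summable
  by (intro xu_tendsto_0[where g = "\<lambda>n. 1 - \<beta> (Suc n)" and b = "\<lambda>_. 0"]) auto

lemma halpern_bounded:
  assumes "T p = p"
  shows "N (y n - p) \<le> N (x0 - p)"
proof (induction n)
  case (Suc n)
  have "y (Suc n) - p = (1 - \<beta> (Suc n)) *\<^sub>R (x0 - p) + \<beta> (Suc n) *\<^sub>R (T (y n) - T p)"
    using assms by (simp add: algebra_simps)
  then have "N (y (Suc n) - p) \<le> (1 - \<beta> (Suc n)) * N (x0 - p) + \<beta> (Suc n) * N (T (y n) - T p)"
    using convex_combination_le[OF beta_nonneg beta_le_1] by simp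
  also have "\<dots> \<le> (1 - \<beta> (Suc n)) * N (x0 - p) + \<beta> (Suc n) * N (x0 - p)"
    using T_nonexpansive[of "y n" p] Suc beta_nonneg by (intro add_left_mono mult_left_mono) auto
  finally show ?case
    by (simp add: algebra_simps)
qed simp

lemma T_halpern_bounded: obtains R where "\<And>n. N (T (y n) - x0) \<le> R"
proof -
  obtain p where p: "T p = p"
    using has_fixed_point by blast
  have "N (T (y n) - x0) \<le> 2 * N (x0 - p)" for n
    using triangle_diff[of "T (y n)" x0 "T p"] T_nonexpansive[of "y n" p] halpern_bounded[OF p, of n]
      minus_commute[of x0 p] p by simp
  then show ?thesis
    using that by blast
qed

lemma halpern_step_tendsto_0: "(\<lambda>n. N (y (Suc n) - y n)) \<longlonglongrightarrow> 0"
proof -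
  obtain R where R: "\<And>n. N (T (y n) - x0) \<le> R"
    using T_halpern_bounded by blast
  define d where "d n = \<bar>\<beta> (Suc (Suc n)) - \<beta> (Suc n)\<bar>" for n
  show ?thesis
  proof (rule halpern_recursion_tendsto_0[where c = "\<lambda>n. d n * R"])
    show "0 \<le> d n * R" for n
      using R[of 0] nonneg[of "T (y 0) - x0"] by (simp add: d_def)
    show "summable (\<lambda>n. d n * R)"
      using beta_summable_diff by (simp add: d_def summable_mult2)
    show "N (y (Suc (Suc n)) - y (Suc n)) \<le> \<beta> (Suc n) * N (y (Suc n) - y n) + d n * R" for n
    proof -
      have "y (Suc (Suc n)) - y (Suc n) = (\<beta> (Suc (Suc n)) - \<beta> (Suc n)) *\<^sub>R (T (y (Suc n)) - x0)
          + \<beta> (Suc n) *\<^sub>R (T (y (Suc n)) - T (y n))"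
        by (simp add: algebra_simps)
      then have "N (y (Suc (Suc n)) - y (Suc n))
          \<le> N ((\<beta> (Suc (Suc n)) - \<beta> (Suc n)) *\<^sub>R (T (y (Suc n)) - x0))
            + N (\<beta> (Suc n) *\<^sub>R (T (y (Suc n)) - T (y n)))"
        by (metis triangle)
      also have "\<dots> = d n * N (T (y (Suc n)) - x0) + \<beta> (Suc n) * N (T (y (Suc n)) - T (y n))"
        using beta_nonneg by (simp add: scaleR d_def del: halpern.simps)
      also have "\<dots> \<le> d n * R + \<beta> (Suc n) * N (y (Suc n) - y n)"
        using R[of "Suc n"] T_nonexpansive[of "y (Suc n)" "y n"] beta_nonneg[of n]
        by (intro add_mono mult_left_mono) (simp_all add: d_def del: halpern.simps)
      finally show ?thesis
        by simp
    qed
  qed (simp_all add: nonneg)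
qed

lemma halpern_asymptotically_regular: "(\<lambda>n. N (y n - T (y n))) \<longlonglongrightarrow> 0"
proof -
  obtain R where R: "\<And>n. N (T (y n) - x0) \<le> R"
    using T_halpern_bounded by blast
  have bound: "N (y (Suc n) - T (y (Suc n))) \<le> (1 - \<beta> (Suc n)) * R + N (y (Suc n) - y n)" for n
  proof -
    have "y (Suc n) - T (y (Suc n)) = (1 - \<beta> (Suc n)) *\<^sub>R (x0 - T (y n)) + (T (y n) - T (y (Suc n)))"
      by (simp add: algebra_simps)
    then have "N (y (Suc n) - T (y (Suc n)))
        \<le> N ((1 - \<beta> (Suc n)) *\<^sub>R (x0 - T (y n))) + N (T (y n) - T (y (Suc n)))"
      by (simp only: triangle)
    also have "\<dots> = (1 - \<beta> (Suc n)) * N (T (y n) - x0) + N (T (y n) - T (y (Suc n)))"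
      using beta_le_1[of n] by (simp add: scaleR minus_commute[of x0 "T (y n)"] del: halpern.simps)
    also have "\<dots> \<le> (1 - \<beta> (Suc n)) * R + N (y (Suc n) - y n)"
      using R[of n] T_nonexpansive[of "y n" "y (Suc n)"] minus_commute[of "y n"] beta_le_1[of n]
      by (intro add_mono mult_left_mono) (simp_all del: halpern.simps)
    finally show ?thesis .
  qed
  have "(\<lambda>n. (1 - \<beta> (Suc n)) * R + N (y (Suc n) - y n)) \<longlonglongrightarrow> (1 - 1) * R + 0"
    by (intro tendsto_intros beta_tendsto_1 halpern_step_tendsto_0)
  then have lim: "(\<lambda>n. (1 - \<beta> (Suc n)) * R + N (y (Suc n) - y n)) \<longlonglongrightarrow> 0"
    by simp
  have "(\<lambda>n. N (y (Suc n) - T (y (Suc n)))) \<longlonglongrightarrow> 0"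
    by (rule Lim_null_comparison[OF always_eventually lim]) (use bound nonneg in simp)
  then show ?thesis
    by (rule LIMSEQ_imp_Suc)
qed

lemma perturbed_halpern_tendsto:
  assumes x: "\<And>n. x (Suc n) = (1 - \<beta> (Suc n)) *\<^sub>R x0 + \<beta> (Suc n) *\<^sub>R (T (x n) + u (Suc n))"
    and u: "summable (\<lambda>n. N (u (Suc n)))"
  shows "(\<lambda>n. N (x n - y n)) \<longlonglongrightarrow> 0"
proof (rule halpern_recursion_tendsto_0[where c = "\<lambda>n. N (u (Suc n))"])
  show "N (x (Suc n) - y (Suc n)) \<le> \<beta> (Suc n) * N (x n - y n) + N (u (Suc n))" for n
  proof -
    have "x (Suc n) - y (Suc n) = \<beta> (Suc n) *\<^sub>R ((T (x n) - T (y n)) + u (Suc n))"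
      by (simp add: x algebra_simps)
    then have "N (x (Suc n) - y (Suc n)) = \<beta> (Suc n) * N ((T (x n) - T (y n)) + u (Suc n))"
      using beta_nonneg[of n] by (simp add: scaleR del: halpern.simps)
    also have "\<dots> \<le> \<beta> (Suc n) * (N (x n - y n) + N (u (Suc n)))"
      using triangle[of "T (x n) - T (y n)" "u (Suc n)"] T_nonexpansive[of "x n" "y n"] beta_nonneg[of n]
      by (intro mult_left_mono) simp_all
    also have "\<dots> \<le> \<beta> (Suc n) * N (x n - y n) + N (u (Suc n))"
      using beta_le_1[of n] beta_nonneg[of n] nonneg[of "u (Suc n)"]
      by (simp add: distrib_left mult_left_le_one_le)
    finally show ?thesis .
  qed
qed (simp_all add: nonneg u)

lemma perturbed_halpern_asymptotically_regular:
  assumes x: "\<And>n. x (Suc n) = (1 - \<beta> (Suc n)) *\<^sub>R x0 + \<beta> (Suc n) *\<^sub>R (T (x n) + u (Suc n))"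
    and u: "summable (\<lambda>n. N (u (Suc n)))"
  shows "(\<lambda>n. N (x n - T (x n))) \<longlonglongrightarrow> 0"
proof -
  have bound: "N (x n - T (x n)) \<le> 2 * N (x n - y n) + N (y n - T (y n))" for n
    using triangle_diff[of "x n" "T (x n)" "y n"] triangle_diff[of "y n" "T (x n)" "T (y n)"]
      T_nonexpansive[of "y n" "x n"] minus_commute[of "y n" "x n"] by linarith
  have "(\<lambda>n. 2 * N (x n - y n) + N (y n - T (y n))) \<longlonglongrightarrow> 2 * 0 + 0"
    by (intro tendsto_intros perturbed_halpern_tendsto[OF x u] halpern_asymptotically_regular)
  then have lim: "(\<lambda>n. 2 * N (x n - y n) + N (y n - T (y n))) \<longlonglongrightarrow> 0"
    by simp
  show ?thesis
    by (rule Lim_null_comparison[OF always_eventually lim]) (simp add: nonneg bound)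
qed

lemma perturbed_halpern_limit_point_fixed:
  assumes x: "\<And>n. x (Suc n) = (1 - \<beta> (Suc n)) *\<^sub>R x0 + \<beta> (Suc n) *\<^sub>R (T (x n) + u (Suc n))"
    and u: "summable (\<lambda>n. N (u (Suc n)))"
    and r: "strict_mono r" and lim: "(\<lambda>n. N (x (r n) - p)) \<longlonglongrightarrow> 0"
  shows "T p = p"
proof (rule fixed_point_if_asymptotically_fixed[OF nonexpansive _ lim])
  show "(\<lambda>n. N (x (r n) - T (x (r n)))) \<longlonglongrightarrow> 0"
    using LIMSEQ_subseq_LIMSEQ[OF perturbed_halpern_asymptotically_regular[OF x u] r]
    by (simp add: o_def)
qed

end

section \<open>The directional derivative of the squared norm\<close>

lemma filterlim_times_at_0:
  fixes c :: real
  assumes "c \<noteq> 0"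
  shows "filterlim (\<lambda>t. c * t) (at 0) (at 0)"
  using assms by (auto simp: filterlim_at eventually_at_filter intro!: tendsto_mult_right_zero tendsto_ident_at)

text \<open>\<open>sq_deriv N v w\<close> is \<open>D(v; w)\<close>, the derivative of \<open>N\<^sup>2\<close> at \<open>v\<close> in direction \<open>w\<close>.  \<open>Lim\<close> is an
  unspecified value when the limit does not exist; for a smooth norm it always exists.\<close>

definition sq_deriv :: "('v::real_vector \<Rightarrow> real) \<Rightarrow> 'v \<Rightarrow> 'v \<Rightarrow> real" where
  "sq_deriv N v w = Lim (at 0) (\<lambda>t. ((N (v + t *\<^sub>R w))\<^sup>2 - (N v)\<^sup>2) / t)"

locale smooth_norm_function = norm_function +
  assumes smooth: "smooth_norm N"
begin

lemma dir_deriv_exists: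
  assumes "v \<noteq> 0"
  shows "\<exists>L. ((\<lambda>t. (N (v + t *\<^sub>R w) - N v) / t) \<longlongrightarrow> L) (at 0)"
proof (cases "w = 0")
  case False
  have Nv: "N v > 0" and Nw: "N w > 0"
    using assms False nonneg eq_0_iff by (metis order_less_le)+
  define k where "k = N w / N v"
  define x where "x = (1 / N v) *\<^sub>R v"
  define z where "z = (1 / N w) *\<^sub>R w"
  have "N x = 1" "N z = 1"
    using Nv Nw by (simp_all add: x_def z_def scaleR)
  then obtain L where "((\<lambda>s. (N (x + s *\<^sub>R z) - N x) / s) \<longlongrightarrow> L) (at 0)"
    using smooth unfolding smooth_norm_def by blast
  then have "((\<lambda>t. N v * k * ((N (x + (k * t) *\<^sub>R z) - N x) / (k * t))) \<longlongrightarrow> N v * k * L) (at 0)"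
    using Nv Nw by (intro tendsto_intros filterlim_compose[OF _ filterlim_times_at_0]) (auto simp: k_def)
  moreover have "N v * k * ((N (x + (k * t) *\<^sub>R z) - N x) / (k * t)) = (N (v + t *\<^sub>R w) - N v) / t" for t
  proof -
    have "v + t *\<^sub>R w = N v *\<^sub>R (x + (k * t) *\<^sub>R z)"
      using Nv Nw by (simp add: x_def z_def k_def scaleR_add_right)
    then have "N (v + t *\<^sub>R w) = N v * N (x + (k * t) *\<^sub>R z)"
      using Nv by (simp add: scaleR)
    then show ?thesis
      using Nv Nw \<open>N x = 1\<close> by (cases "t = 0") (simp_all add: k_def field_simps)
  qed
  ultimately show ?thesis
    by auto
qed (use tendsto_const in auto)

lemma sq_deriv_tendsto: "((\<lambda>t. ((N (v + t *\<^sub>R w))\<^sup>2 - (N v)\<^sup>2) / t) \<longlongrightarrow> sq_deriv N v w) (at 0)"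
proof -
  have "\<exists>L. ((\<lambda>t. ((N (v + t *\<^sub>R w))\<^sup>2 - (N v)\<^sup>2) / t) \<longlongrightarrow> L) (at 0)"
  proof (cases "v = 0")
    case True
    have "((\<lambda>t. t * (N w)\<^sup>2) \<longlongrightarrow> 0 * (N w)\<^sup>2) (at 0)"
      by (intro tendsto_intros tendsto_ident_at)
    moreover have "\<forall>\<^sub>F t in at 0. t * (N w)\<^sup>2 = ((N (v + t *\<^sub>R w))\<^sup>2 - (N v)\<^sup>2) / t"
      unfolding eventually_at_filter
    proof (rule always_eventually, intro allI impI)
      fix t :: real
      assume "t \<noteq> 0"
      have "(N (t *\<^sub>R w))\<^sup>2 = t\<^sup>2 * (N w)\<^sup>2"
        by (simp add: scaleR power_mult_distrib)
      then show "t * (N w)\<^sup>2 = ((N (v + t *\<^sub>R w))\<^sup>2 - (N v)\<^sup>2) / t"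
        using \<open>t \<noteq> 0\<close> by (simp add: True power2_eq_square)
    qed
    ultimately show ?thesis
      using tendsto_cong by force
  next
    case False
    then obtain L where L: "((\<lambda>t. (N (v + t *\<^sub>R w) - N v) / t) \<longlongrightarrow> L) (at 0)"
      using dir_deriv_exists by blast
    have "((\<lambda>t. (N (v + t *\<^sub>R w) + N v) * ((N (v + t *\<^sub>R w) - N v) / t)) \<longlongrightarrow> (N v + N v) * L) (at 0)"
      by (intro tendsto_intros tendsto_along_line L)
    then show ?thesis
      by (auto simp: power2_eq_square algebra_simps)
  qed
  then obtain L where L: "((\<lambda>t. ((N (v + t *\<^sub>R w))\<^sup>2 - (N v)\<^sup>2) / t) \<longlongrightarrow> L) (at 0)"
    by blast
  then have "sq_deriv N v w = L"
    unfolding sq_deriv_def by (intro tendsto_Lim) auto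
  with L show ?thesis
    by simp
qed

lemma sq_deriv_le_quotient:
  assumes "0 < s"
  shows "sq_deriv N v w \<le> ((N (v + s *\<^sub>R w))\<^sup>2 - (N v)\<^sup>2) / s"
proof (rule tendsto_upperbound[OF tendsto_mono[OF at_le sq_deriv_tendsto]])
  show "\<forall>\<^sub>F u in at_right 0. ((N (v + u *\<^sub>R w))\<^sup>2 - (N v)\<^sup>2) / u \<le> ((N (v + s *\<^sub>R w))\<^sup>2 - (N v)\<^sup>2) / s"
    using assms by (auto simp: eventually_at_right_field intro!: exI[of _ s] sq_quotient_mono)
qed simp_all

lemma sq_deriv_scaleR: "sq_deriv N v (c *\<^sub>R w) = c * sq_deriv N v w"
proof -
  have "((\<lambda>t. ((N (v + t *\<^sub>R (c *\<^sub>R w)))\<^sup>2 - (N v)\<^sup>2) / t) \<longlongrightarrow> c * sq_deriv N v w) (at 0)"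
  proof (cases "c = 0")
    case False
    have "((\<lambda>t. c * (((N (v + (c * t) *\<^sub>R w))\<^sup>2 - (N v)\<^sup>2) / (c * t))) \<longlongrightarrow> c * sq_deriv N v w) (at 0)"
      by (intro tendsto_mult tendsto_const filterlim_compose[OF sq_deriv_tendsto filterlim_times_at_0[OF False]])
    moreover have "c * (((N (v + (c * t) *\<^sub>R w))\<^sup>2 - (N v)\<^sup>2) / (c * t))
        = ((N (v + t *\<^sub>R (c *\<^sub>R w)))\<^sup>2 - (N v)\<^sup>2) / t" for t
      using False by (simp add: mult.commute)
    ultimately show ?thesis
      by simp
  qed simp
  then show ?thesis
    by (rule tendsto_unique[OF at_neq_bot sq_deriv_tendsto])
qed

lemma sq_deriv_subadditive: "sq_deriv N v (a + b) \<le> sq_deriv N v a + sq_deriv N v b"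
proof -
  define q where "q u s = ((N (v + s *\<^sub>R u))\<^sup>2 - (N v)\<^sup>2) / s" for u s
  have "((\<lambda>s. (q (2 *\<^sub>R a) s + q (2 *\<^sub>R b) s) / 2)
      \<longlongrightarrow> (sq_deriv N v (2 *\<^sub>R a) + sq_deriv N v (2 *\<^sub>R b)) / 2) (at_right 0)"
    unfolding q_def by (intro tendsto_intros tendsto_mono[OF at_le sq_deriv_tendsto]) simp_all
  moreover have "sq_deriv N v (a + b) \<le> (q (2 *\<^sub>R a) s + q (2 *\<^sub>R b) s) / 2" if "0 < s" for s
  proof -
    have "v + s *\<^sub>R (a + b) = (1 - 1 / 2) *\<^sub>R (v + s *\<^sub>R (2 *\<^sub>R a)) + (1 / 2) *\<^sub>R (v + s *\<^sub>R (2 *\<^sub>R b))"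
      by (simp add: algebra_simps flip: scaleR_add_left)
    then have "(N (v + s *\<^sub>R (a + b)))\<^sup>2 \<le> (N (v + s *\<^sub>R (2 *\<^sub>R a)))\<^sup>2 / 2 + (N (v + s *\<^sub>R (2 *\<^sub>R b)))\<^sup>2 / 2"
      using convex_combination_sq_le[of "1 / 2" "v + s *\<^sub>R (2 *\<^sub>R a)" "v + s *\<^sub>R (2 *\<^sub>R b)"] by simp
    then have "q (a + b) s
        \<le> ((N (v + s *\<^sub>R (2 *\<^sub>R a)))\<^sup>2 / 2 + (N (v + s *\<^sub>R (2 *\<^sub>R b)))\<^sup>2 / 2 - (N v)\<^sup>2) / s"
      unfolding q_def using that by (intro divide_right_mono) auto
    also have "\<dots> = (q (2 *\<^sub>R a) s + q (2 *\<^sub>R b) s) / 2"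
      unfolding q_def using that by (simp add: field_simps)
    finally have "q (a + b) s \<le> (q (2 *\<^sub>R a) s + q (2 *\<^sub>R b) s) / 2" .
    then show ?thesis
      using sq_deriv_le_quotient[OF that, of v "a + b"] unfolding q_def by linarith
  qed
  then have "\<forall>\<^sub>F s in at_right 0. sq_deriv N v (a + b) \<le> (q (2 *\<^sub>R a) s + q (2 *\<^sub>R b) s) / 2"
    using eventually_at_right_less[of "0::real"] by (rule eventually_mono[rotated])
  ultimately have "sq_deriv N v (a + b) \<le> (sq_deriv N v (2 *\<^sub>R a) + sq_deriv N v (2 *\<^sub>R b)) / 2"
    by (rule tendsto_lowerbound) simp
  then show ?thesis
    by (simp add: sq_deriv_scaleR)
qed

lemma sq_deriv_add: "sq_deriv N v (a + b) = sq_deriv N v a + sq_deriv N v b"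
  using sq_deriv_subadditive[of v a b] sq_deriv_subadditive[of v "- a" "- b"]
    sq_deriv_scaleR[of v "-1" "a + b"] sq_deriv_scaleR[of v "-1" a] sq_deriv_scaleR[of v "-1" b]
  by simp

lemma sq_deriv_self: "sq_deriv N v v = 2 * (N v)\<^sup>2"
proof -
  have "((\<lambda>t. (2 + t) * (N v)\<^sup>2) \<longlongrightarrow> (2 + 0) * (N v)\<^sup>2) (at 0)"
    by (intro tendsto_intros tendsto_ident_at)
  moreover have "\<forall>\<^sub>F t in at 0. (2 + t) * (N v)\<^sup>2 = ((N (v + t *\<^sub>R v))\<^sup>2 - (N v)\<^sup>2) / t"
    unfolding eventually_at
  proof (intro exI[of _ 1] conjI ballI impI)
    fix t :: real
    assume t: "t \<noteq> 0 \<and> dist t 0 < 1"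
    then have "0 < 1 + t"
      by (auto simp: dist_real_def)
    moreover have "v + t *\<^sub>R v = (1 + t) *\<^sub>R v"
      by (simp add: algebra_simps)
    ultimately have "N (v + t *\<^sub>R v) = (1 + t) * N v"
      by (simp add: scaleR)
    then show "(2 + t) * (N v)\<^sup>2 = ((N (v + t *\<^sub>R v))\<^sup>2 - (N v)\<^sup>2) / t"
      using t by (simp add: field_simps power2_eq_square)
  qed simp
  ultimately have "((\<lambda>t. ((N (v + t *\<^sub>R v))\<^sup>2 - (N v)\<^sup>2) / t) \<longlongrightarrow> 2 * (N v)\<^sup>2) (at 0)"
    using tendsto_cong by force
  then show ?thesis
    by (rule tendsto_unique[OF at_neq_bot sq_deriv_tendsto])
qed

lemma sq_deriv_minus: "sq_deriv N (- v) (- w) = sq_deriv N v w"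
proof -
  have "N (- v + t *\<^sub>R (- w)) = N (v + t *\<^sub>R w)" for t
    using minus[of "v + t *\<^sub>R w"] by (simp add: algebra_simps)
  then show ?thesis
    by (simp add: sq_deriv_def minus)
qed

lemma sq_deriv_upper_semicontinuous:
  assumes v: "(\<lambda>k. N (v k - v0)) \<longlonglongrightarrow> 0" and a: "a \<longlonglongrightarrow> a0"
    and le: "\<And>k. a k \<le> sq_deriv N (v k) w"
  shows "a0 \<le> sq_deriv N v0 w"
proof (rule tendsto_lowerbound[OF tendsto_mono[OF at_le sq_deriv_tendsto]])
  show "\<forall>\<^sub>F s in at_right 0. a0 \<le> ((N (v0 + s *\<^sub>R w))\<^sup>2 - (N v0)\<^sup>2) / s"
    unfolding eventually_at_right_field
  proof (intro exI[of _ 1] conjI allI impI)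
    fix s :: real
    assume s: "0 < s" "s < 1"
    have "(\<lambda>k. ((N (v k + s *\<^sub>R w))\<^sup>2 - (N (v k + 0))\<^sup>2) / s)
        \<longlonglongrightarrow> ((N (v0 + s *\<^sub>R w))\<^sup>2 - (N (v0 + 0))\<^sup>2) / s"
      using s by (intro tendsto_intros tendsto_add_const[OF v]) auto
    moreover have "a k \<le> ((N (v k + s *\<^sub>R w))\<^sup>2 - (N (v k + 0))\<^sup>2) / s" for k
      using le[of k] sq_deriv_le_quotient[of s "v k" w] s by simp
    ultimately show "a0 \<le> ((N (v0 + s *\<^sub>R w))\<^sup>2 - (N v0)\<^sup>2) / s"
      using a by (simp add: LIMSEQ_le)
  qed simp
qed simp_all

text \<open>\<open>N\<^sup>2\<close> lies above its tangent, \<open>N(v)\<^sup>2 + D(v; w) \<le> N(v + w)\<^sup>2\<close>; take \<open>w = -(1 - b) (x - p)\<close>.\<close>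

lemma sq_deriv_anchored_step:
  assumes "0 \<le> b" "b \<le> 1"
  shows "(N ((1 - b) *\<^sub>R x + b *\<^sub>R a - p))\<^sup>2
    \<le> b\<^sup>2 * (N (a - p))\<^sup>2 + (1 - b) * sq_deriv N ((1 - b) *\<^sub>R x + b *\<^sub>R a - p) (x - p)"
proof -
  define v where "v = (1 - b) *\<^sub>R x + b *\<^sub>R a - p"
  have "- (1 - b) * sq_deriv N v (x - p) = sq_deriv N v (- (1 - b) *\<^sub>R (x - p))"
    by (simp only: sq_deriv_scaleR)
  also have "\<dots> \<le> (N (v + - (1 - b) *\<^sub>R (x - p)))\<^sup>2 - (N v)\<^sup>2"
    using sq_deriv_le_quotient[of 1 v] by simp
  also have "v + - (1 - b) *\<^sub>R (x - p) = b *\<^sub>R (a - p)"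
    by (simp add: v_def algebra_simps)
  also have "(N (b *\<^sub>R (a - p)))\<^sup>2 = b\<^sup>2 * (N (a - p))\<^sup>2"
    using assms by (simp add: scaleR power_mult_distrib)
  finally show ?thesis
    unfolding v_def[symmetric] by (simp add: algebra_simps)
qed

lemma anchored_fixed_point_sq_deriv:
  assumes T: "nonexpansive_wrt N T" and p: "T p = p"
    and z: "z = (1 - t) *\<^sub>R x + t *\<^sub>R T z" and t: "0 \<le> t" "t < 1"
  shows "(1 + t) * (N (z - p))\<^sup>2 \<le> sq_deriv N (z - p) (x - p)"
proof -
  have "(N (z - p))\<^sup>2 \<le> t\<^sup>2 * (N (T z - p))\<^sup>2 + (1 - t) * sq_deriv N (z - p) (x - p)"
    using sq_deriv_anchored_step[of t x "T z" p] t z by simp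
  also have "\<dots> \<le> t\<^sup>2 * (N (z - p))\<^sup>2 + (1 - t) * sq_deriv N (z - p) (x - p)"
    using T[unfolded nonexpansive_wrt_def, rule_format, of z p] p nonneg
    by (intro add_right_mono mult_left_mono power_mono) simp_all
  finally have "(1 - t) * ((1 + t) * (N (z - p))\<^sup>2) \<le> (1 - t) * sq_deriv N (z - p) (x - p)"
    by (simp add: algebra_simps power2_eq_square)
  then show ?thesis
    using t by simp
qed

text \<open>Passing to the limit in \<open>(1 + t) N(z\<^sub>t - p)\<^sup>2 \<le> D(z\<^sub>t - p; x - p)\<close> gives
  \<open>2 N(q - p)\<^sup>2 \<le> D(q - p; x - p)\<close>; since \<open>D(q - p; \<cdot>)\<close> is linear with \<open>D(q - p; q - p) = 2 N(q - p)\<^sup>2\<close>,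
  this says \<open>D(q - p; q - x) \<le> 0\<close>.\<close>

lemma sq_deriv_at_anchored_limit:
  assumes T: "nonexpansive_wrt N T" and p: "T p = p"
    and z: "\<And>k. z k = (1 - t k) *\<^sub>R x + t k *\<^sub>R T (z k)" and t: "\<And>k. 0 \<le> t k" "\<And>k. t k < 1"
    and t_lim: "t \<longlonglongrightarrow> 1" and z_lim: "(\<lambda>k. N (z k - q)) \<longlonglongrightarrow> 0"
  shows "sq_deriv N (p - q) (x - q) \<le> 0"
proof -
  have v_lim: "(\<lambda>k. N ((z k - p) - (q - p))) \<longlonglongrightarrow> 0"
    using z_lim by simp
  have "(\<lambda>k. N (z k + - p)) \<longlonglongrightarrow> N (q + - p)"
    by (rule tendsto_add_const[OF z_lim])
  then have "(\<lambda>k. (1 + t k) * (N (z k + - p))\<^sup>2) \<longlonglongrightarrow> (1 + 1) * (N (q + - p))\<^sup>2"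
    by (intro tendsto_mult tendsto_add tendsto_power tendsto_const t_lim)
  then have a_lim: "(\<lambda>k. (1 + t k) * (N (z k - p))\<^sup>2) \<longlonglongrightarrow> 2 * (N (q - p))\<^sup>2"
    by simp
  have "2 * (N (q - p))\<^sup>2 \<le> sq_deriv N (q - p) (x - p)"
    by (rule sq_deriv_upper_semicontinuous[OF v_lim a_lim anchored_fixed_point_sq_deriv[OF T p z t]])
  moreover have "sq_deriv N (q - p) (x - p) + sq_deriv N (q - p) (q - x) = 2 * (N (q - p))\<^sup>2"
    using sq_deriv_add[of "q - p" "x - p" "q - x"] sq_deriv_self[of "q - p"] by simp
  moreover have "sq_deriv N (p - q) (x - q) = sq_deriv N (q - p) (q - x)"
    using sq_deriv_minus[of "q - p" "q - x"] by simp
  ultimately show ?thesis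
    by linarith
qed

end

section \<open>Strong convergence for smooth norms\<close>

locale smooth_fin_dim_norm = fin_dim_norm N + smooth_norm_function N
  for N :: "'v::euclidean_space \<Rightarrow> real"
begin

text \<open>\<open>q\<close> is a cluster point, as \<open>t \<rightarrow> 1\<close>, of the path \<open>z\<^sub>t = (1 - t) x + t T z\<^sub>t\<close>.\<close>

lemma variational_fixed_point_exists:
  assumes T: "nonexpansive_wrt N T" and p: "T p = p"
  obtains q where "T q = q" "\<And>p'. T p' = p' \<Longrightarrow> sq_deriv N (p' - q) (x - q) \<le> 0"
proof -
  define t :: "nat \<Rightarrow> real" where "t = (\<lambda>k. 1 - 1 / real (k + 2))"
  have t: "0 \<le> t k" "t k < 1" for k
    by (auto simp: t_def)
  have "(\<lambda>k. 1 - 1 / real (k + 2)) \<longlonglongrightarrow> 1 - 0"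
    by (intro tendsto_diff tendsto_const LIMSEQ_ignore_initial_segment[OF lim_1_over_n])
  then have t_lim: "t \<longlonglongrightarrow> 1"
    unfolding t_def by simp
  have "\<forall>k. \<exists>zk. zk = (1 - t k) *\<^sub>R x + t k *\<^sub>R T zk"
    using anchored_fixed_point_exists[OF T p] t less_imp_le by metis
  then obtain z where z: "\<And>k. z k = (1 - t k) *\<^sub>R x + t k *\<^sub>R T (z k)"
    by metis
  obtain r q where r: "strict_mono r" and z_lim: "(\<lambda>k. N (z (r k) - q)) \<longlonglongrightarrow> 0"
    using bounded_seq_has_convergent_subseq[of z p "N (x - p)"] anchored_fixed_point_bound[OF T p z t]
    by blast
  have t_r: "(\<lambda>k. t (r k)) \<longlonglongrightarrow> 1"
    using LIMSEQ_subseq_LIMSEQ[OF t_lim r] by (simp add: o_def)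
  show ?thesis
  proof
    show "T q = q"
      using fixed_point_of_anchored_limit[OF T p z t t_r z_lim] .
    show "sq_deriv N (p' - q) (x - q) \<le> 0" if "T p' = p'" for p'
      using sq_deriv_at_anchored_limit[OF T that z t t_r z_lim] .
  qed
qed

end

locale smooth_halpern_iteration = halpern_iteration N T \<beta> x0 + smooth_fin_dim_norm N
  for N :: "'v::euclidean_space \<Rightarrow> real" and T \<beta> x0
begin

lemma sq_deriv_halpern_limsup:
  assumes q: "\<And>p. T p = p \<Longrightarrow> sq_deriv N (p - q) (x0 - q) \<le> 0" and "0 < e"
  shows "\<forall>\<^sub>F n in sequentially. sq_deriv N (y n - q) (x0 - q) \<le> e"
proof (rule ccontr)
  assume "\<not> ?thesis"
  from not_eventually_sequentiallyD[OF this]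
  obtain r :: "nat \<Rightarrow> nat" where r: "strict_mono r" and large: "\<And>n. \<not> sq_deriv N (y (r n) - q) (x0 - q) \<le> e"
    by blast
  obtain p0 where "T p0 = p0"
    using has_fixed_point by blast
  then obtain r' p where r': "strict_mono r'" and y_lim: "(\<lambda>k. N (y (r (r' k)) - p)) \<longlonglongrightarrow> 0"
    using bounded_seq_has_convergent_subseq[of "\<lambda>k. y (r k)" p0] halpern_bounded by blast
  have "(\<lambda>k. N (y (r (r' k)) - T (y (r (r' k))))) \<longlonglongrightarrow> 0"
    using LIMSEQ_subseq_LIMSEQ[OF halpern_asymptotically_regular strict_mono_o[OF r r']]
    by (simp add: o_def)
  then have "T p = p"
    by (rule fixed_point_if_asymptotically_fixed[OF nonexpansive _ y_lim])
  have "e \<le> sq_deriv N (p - q) (x0 - q)"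
    by (rule sq_deriv_upper_semicontinuous[where v = "\<lambda>k. y (r (r' k)) - q" and a = "\<lambda>_. e"])
      (use y_lim large in \<open>auto simp: not_le intro: less_imp_le\<close>)
  with q[OF \<open>T p = p\<close>] \<open>0 < e\<close> show False
    by linarith
qed

lemma halpern_tendsto_variational_fixed_point:
  assumes q: "T q = q" "\<And>p. T p = p \<Longrightarrow> sq_deriv N (p - q) (x0 - q) \<le> 0"
  shows "(\<lambda>n. N (y n - q)) \<longlonglongrightarrow> 0"
proof -
  have "(\<lambda>n. (N (y n - q))\<^sup>2) \<longlonglongrightarrow> 0"
  proof (rule xu_tendsto_0[where g = "\<lambda>n. 1 - \<beta> (Suc n)" and c = "\<lambda>_. 0"
        and b = "\<lambda>n. sq_deriv N (y (Suc n) - q) (x0 - q)"])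
    show "\<forall>\<^sub>F n in sequentially. sq_deriv N (y (Suc n) - q) (x0 - q) \<le> e" if "0 < e" for e
      using sq_deriv_halpern_limsup[OF q(2) that] by (rule eventually_sequentially_Suc[THEN iffD2])
    show "\<forall>\<^sub>F n in sequentially. (N (y (Suc n) - q))\<^sup>2
        \<le> (1 - (1 - \<beta> (Suc n))) * (N (y n - q))\<^sup>2
          + (1 - \<beta> (Suc n)) * sq_deriv N (y (Suc n) - q) (x0 - q) + 0"
    proof (rule always_eventually, rule allI)
      fix n
      have "(N (y (Suc n) - q))\<^sup>2
          \<le> (\<beta> (Suc n))\<^sup>2 * (N (T (y n) - q))\<^sup>2 + (1 - \<beta> (Suc n)) * sq_deriv N (y (Suc n) - q) (x0 - q)"
        using sq_deriv_anchored_step[OF beta_nonneg[of n] beta_le_1[of n], of x0 "T (y n)" q] by simp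
      moreover have "(\<beta> (Suc n))\<^sup>2 * (N (T (y n) - q))\<^sup>2 \<le> \<beta> (Suc n) * (N (y n - q))\<^sup>2"
      proof (rule mult_mono)
        show "(\<beta> (Suc n))\<^sup>2 \<le> \<beta> (Suc n)"
          using beta_nonneg[of n] beta_le_1[of n] by (simp add: power2_eq_square mult_left_le_one_le)
        show "(N (T (y n) - q))\<^sup>2 \<le> (N (y n - q))\<^sup>2"
          using T_nonexpansive[of "y n" q] q(1) nonneg by (simp add: power_mono del: halpern.simps)
      qed (simp_all add: beta_nonneg)
      ultimately show "(N (y (Suc n) - q))\<^sup>2
        \<le> (1 - (1 - \<beta> (Suc n))) * (N (y n - q))\<^sup>2
          + (1 - \<beta> (Suc n)) * sq_deriv N (y (Suc n) - q) (x0 - q) + 0"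
        by simp
    qed
  qed (use beta_nonneg beta_le_1 beta_not_summable in auto)
  then have "(\<lambda>n. sqrt ((N (y n - q))\<^sup>2)) \<longlonglongrightarrow> sqrt 0"
    by (rule tendsto_real_sqrt)
  then show ?thesis
    by (simp add: nonneg)
qed

lemma halpern_convergent: obtains q where "T q = q" "(\<lambda>n. N (y n - q)) \<longlonglongrightarrow> 0"
  using variational_fixed_point_exists[OF nonexpansive] has_fixed_point
    halpern_tendsto_variational_fixed_point by metis

lemma perturbed_halpern_convergent:
  assumes x: "\<And>n. x (Suc n) = (1 - \<beta> (Suc n)) *\<^sub>R x0 + \<beta> (Suc n) *\<^sub>R (T (x n) + u (Suc n))"
    and u: "summable (\<lambda>n. N (u (Suc n)))"
  obtains q where "T q = q" "(\<lambda>n. N (x n - q)) \<longlonglongrightarrow> 0"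
proof -
  obtain q where q: "T q = q" "(\<lambda>n. N (y n - q)) \<longlonglongrightarrow> 0"
    using halpern_convergent by blast
  have "(\<lambda>n. N (x n - y n) + N (y n - q)) \<longlonglongrightarrow> 0 + 0"
    by (intro tendsto_add perturbed_halpern_tendsto[OF x u] q(2))
  then have lim: "(\<lambda>n. N (x n - y n) + N (y n - q)) \<longlonglongrightarrow> 0"
    by simp
  have "(\<lambda>n. N (x n - q)) \<longlonglongrightarrow> 0"
    by (rule Lim_null_comparison[OF always_eventually lim]) (simp add: nonneg triangle_diff)
  with q(1) that show ?thesis
    by blast
qed

end

section \<open>The stochastic iteration\<close>

lemma AE_summable_if_summable_integrals:
  fixes f :: "nat \<Rightarrow> 'a \<Rightarrow> real"
  assumes int: "\<And>n. integrable M (f n)" and nonneg: "\<And>n \<omega>. 0 \<le> f n \<omega>"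
    and summable: "summable (\<lambda>n. \<integral>\<omega>. f n \<omega> \<partial>M)"
  shows "AE \<omega> in M. summable (\<lambda>n. f n \<omega>)"
proof -
  have meas: "(\<lambda>\<omega>. ennreal (f n \<omega>)) \<in> borel_measurable M" for n
    using borel_measurable_integrable[OF int] by simp
  have "(\<integral>\<^sup>+ \<omega>. (\<Sum>n. ennreal (f n \<omega>)) \<partial>M) = (\<Sum>n. \<integral>\<^sup>+ \<omega>. ennreal (f n \<omega>) \<partial>M)"
    by (rule nn_integral_suminf[OF meas])
  also have "\<dots> = (\<Sum>n. ennreal (\<integral>\<omega>. f n \<omega> \<partial>M))"
    using nn_integral_eq_integral[OF int] nonneg by simp
  also have "\<dots> = ennreal (\<Sum>n. \<integral>\<omega>. f n \<omega> \<partial>M)"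
    using nonneg by (intro suminf_ennreal2 summable integral_nonneg_AE) simp_all
  finally have "(\<integral>\<^sup>+ \<omega>. (\<Sum>n. ennreal (f n \<omega>)) \<partial>M) \<noteq> \<infinity>"
    by simp
  then have "AE \<omega> in M. (\<Sum>n. ennreal (f n \<omega>)) \<noteq> \<infinity>"
    by (intro nn_integral_PInf_AE borel_measurable_suminf_order meas)
  then show ?thesis
    by eventually_elim (simp add: nonneg summable_suminf_not_top)
qed

lemma halpern_iteration_if_monotone:
  assumes "is_norm N" "nonexpansive_wrt N T" "\<exists>p. T p = p"
    and "\<forall>n\<ge>1. 0 < \<beta> n \<and> \<beta> n < 1" "\<forall>n\<ge>1. \<beta> n \<le> \<beta> (Suc n)" "\<beta> \<longlonglongrightarrow> 1"
    and "\<not> summable (\<lambda>j. 1 - \<beta> (Suc j))" "summable (\<lambda>j. \<beta> (Suc j) - \<beta> j)"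
  shows "halpern_iteration N T \<beta>"
proof
  show "0 \<le> \<beta> (Suc n)" "\<beta> (Suc n) \<le> 1" for n
    using assms(4) by (auto simp: less_imp_le)
  show "(\<lambda>n. \<beta> (Suc n)) \<longlonglongrightarrow> 1"
    using assms(6) by (rule LIMSEQ_Suc)
  have "summable (\<lambda>n. \<beta> (Suc (Suc n)) - \<beta> (Suc n))"
    using assms(8) by (subst summable_Suc_iff)
  then show "summable (\<lambda>n. \<bar>\<beta> (Suc (Suc n)) - \<beta> (Suc n)\<bar>)"
    using assms(5) by simp
qed (use assms in simp_all)

theorem theorem3:
  fixes N :: "real ^ 'd \<Rightarrow> real"
    and T :: "real ^ 'd \<Rightarrow> real ^ 'd"
    and \<beta> :: "nat \<Rightarrow> real"
    and M :: "'a measure"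
    and U :: "nat \<Rightarrow> 'a \<Rightarrow> real ^ 'd"
    and X :: "nat \<Rightarrow> 'a \<Rightarrow> real ^ 'd"
    and x0 :: "real ^ 'd"
  assumes "is_norm N"
    and "nonexpansive_wrt N T"
    and "\<exists>p. T p = p"
    and "\<beta> 0 = 0"
    and "\<forall>n\<ge>1. 0 < \<beta> n \<and> \<beta> n < 1"
    and "\<forall>n\<ge>1. \<beta> n \<le> \<beta> (Suc n)"
    and "\<beta> \<longlonglongrightarrow> 1"
    and "\<not> summable (\<lambda>j. 1 - \<beta> (Suc j))"
    and "summable (\<lambda>j. \<beta> (Suc j) - \<beta> j)"
    and "prob_space M"
    and "\<forall>n\<ge>1. integrable M (U n)"
    and "\<forall>n\<ge>1. integrable M (\<lambda>\<omega>. N (U n \<omega>))"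
    and "\<forall>n\<ge>1. (\<integral>\<omega>. U n \<omega> \<partial>M) = 0"
    and "summable (\<lambda>n. \<integral>\<omega>. N (U (Suc n) \<omega>) \<partial>M)"
    and "\<forall>\<omega>. X 0 \<omega> = x0"
    and "\<forall>n \<omega>. X (Suc n) \<omega> =
           (1 - \<beta> (Suc n)) *\<^sub>R x0 + \<beta> (Suc n) *\<^sub>R (T (X n \<omega>) + U (Suc n) \<omega>)"
  shows "(AE \<omega> in M.
            ((\<lambda>n. N (X n \<omega> - T (X n \<omega>))) \<longlonglongrightarrow> 0) \<and>
            (\<forall>p. (\<exists>r. strict_mono r \<and> ((\<lambda>n. N (X (r n) \<omega> - p)) \<longlonglongrightarrow> 0)) \<longrightarrow> T p = p))
         \<and> (smooth_norm N \<longrightarrow>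
            (AE \<omega> in M. \<exists>xs. T xs = xs \<and> ((\<lambda>n. N (X n \<omega> - xs)) \<longlonglongrightarrow> 0)))"
proof -
  interpret halpern_iteration N T \<beta> x0
    by (rule halpern_iteration_if_monotone) (use assms in simp_all)
  have X: "\<And>n. X (Suc n) \<omega> = (1 - \<beta> (Suc n)) *\<^sub>R x0 + \<beta> (Suc n) *\<^sub>R (T (X n \<omega>) + U (Suc n) \<omega>)" for \<omega>
    using assms(16) by blast
  have summable_noise: "AE \<omega> in M. summable (\<lambda>n. N (U (Suc n) \<omega>))"
    using assms(12,14) by (intro AE_summable_if_summable_integrals) (simp_all add: nonneg)
  then have "AE \<omega> in M. ((\<lambda>n. N (X n \<omega> - T (X n \<omega>))) \<longlonglongrightarrow> 0) \<and>
      (\<forall>p. (\<exists>r. strict_mono r \<and> ((\<lambda>n. N (X (r n) \<omega> - p)) \<longlonglongrightarrow> 0)) \<longrightarrow> T p = p)"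
  proof eventually_elim
    case (elim \<omega>)
    show ?case
      using perturbed_halpern_asymptotically_regular[OF X elim] perturbed_halpern_limit_point_fixed[OF X elim]
      by blast
  qed
  moreover have "AE \<omega> in M. \<exists>xs. T xs = xs \<and> ((\<lambda>n. N (X n \<omega> - xs)) \<longlonglongrightarrow> 0)"
    if "smooth_norm N"
  proof -
    interpret smooth_halpern_iteration N T \<beta> x0
      by unfold_locales (rule that)
    from summable_noise show ?thesis
    proof eventually_elim
      case (elim \<omega>)
      show ?case
        using perturbed_halpern_convergent[OF X elim] by blast
    qed
  qed
  ultimately show ?thesis
    by blast
qed

end
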